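(* Let $\phi$ be a quantifier-free sentence of $\mathscr{L}_{\max}$. For every $f:\mathbb{N}\to\mathbb{N}$, $\mathscr{M}_f\models\phi$ if and only if there is some $k\in\mathbb{N}$ such that for every $g:\mathbb{N}\to\mathbb{N}$ extending $(f(0),\ldots,f(k))$, $\mathscr{M}_g\models\phi$, and checking $\mathscr{M}_g\models\phi$ via the inductive definition of the semantics never requires querying $g(i)$ for any $i>k$.
   Context: $\mathbb{N}^{<\mathbb{N}}$ denotes the set of finite sequences of naturals. The language $\mathscr{L}_{\max}$ is a first-order language extended with ellipses. Its symbols: a constant symbol $\mathbf{n}$ (also written $\bar n$) for each $n\in\mathbb{N}$; an $n$-ary function symbol $\tilde w$ for each $w:\mathbb{N}^n\to\mathbb{N}$ ($n>0$); an $n$-ary predicate symbol $\tilde p$ for each $p\subseteq\mathbb{N}^n$ ($n>0$); an "$\mathbb{N}^{<\mathbb{N}}$-ary" function symbol $\tilde G$ for each $G:\mathbb{N}^{<\mathbb{N}}\to\mathbb{N}$; one extra unary function symbol $\mathbf{f}$; and, for each variable $x$, a logical symbol $\cdots_x$. Terms and their free variables: a variable $x$ (free variables $\{x\}$); a constant (no free variables); $h(t_1,\ldots,t_n)$ for $h$ an $n$-ary or $\mathbb{N}^{<\mathbb{N}}$-ary function symbol and terms $t_i$ (free variables the union); and, for an $\mathbb{N}^{<\mathbb{N}}$-ary $G$, terms $u,v$ and a variable $x$, the term $G(u(\mathbf{0}),\cdots_x,u(v))$ with free variables $(FV(u)\setminus\{x\})\cup FV(v)$. Formulas are built from these terms as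 usual. Substitution is defined as usual with two new cases: for $y\neq x$, $G(u(\mathbf{0}),\cdots_x,u(v))(y|t)=G(u(y|t)(\mathbf{0}),\cdots_x,u(y|t)(v(y|t)))$, and $G(u(\mathbf{0}),\cdots_x,u(v))(x|t)=G(u(\mathbf{0}),\cdots_x,u(v(x|t)))$. For $f:\mathbb{N}\to\mathbb{N}$, $\mathscr{M}_f$ is the structure with universe $\mathbb{N}$ interpreting $\mathbf{n}$ as $n$, $\tilde w$ as $w$, $\tilde p$ as $p$, $\tilde G$ as $G$, and $\mathbf{f}$ as $f$. Under an assignment $s$, terms are evaluated by the usual induction plus the clause $G(u(\mathbf{0}),\cdots_x,u(v))^{s}=G\big(u(x|\mathbf{0})^{s},\ldots,u(x|\overline{v^{s}})^{s}\big)$; satisfaction is then defined as usual. "Querying $g(i)$" means applying the interpretation $g$ of $\mathbf{f}$ to the argument $i$ during this inductive evaluation. *)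

theory Defs
  imports Main
begin

text \<open>
  Var x: variable; Cst n: constant symbol n-bar;
  Fn w ts: n-ary function symbol w-tilde applied to ts (n = length ts, w : N^n -> N,
    represented as a function on lists of length n);
  GFn G ts: N^{<N}-ary function symbol G-tilde applied to finitely many terms;
  Fq t: the extra unary function symbol f applied to t;
  Ell G u x v: the ellipsis term G(u(0), ..._x, u(v)).
\<close>

datatype trm =
    Var nat
  | Cst nat
  | Fn "nat list \<Rightarrow> nat" "trm list"
  | GFn "nat list \<Rightarrow> nat" "trm list"
  | Fq trm
  | Ell "nat list \<Rightarrow> nat" trm nat trm

datatype fm =
    Eq trm trm
  | Pred "nat list set" "trm list"
  | Neg fm
  | Conj fm fm
  | Disj fm fm
  | Imp fm fm
  | All nat fm
  | Ex nat fm

fun FVt :: "trm \<Rightarrow> nat set" where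
  "FVt (Var x) = {x}"
| "FVt (Cst n) = {}"
| "FVt (Fn w ts) = \<Union> (set (map FVt ts))"
| "FVt (GFn G ts) = \<Union> (set (map FVt ts))"
| "FVt (Fq t) = FVt t"
| "FVt (Ell G u x v) = (FVt u - {x}) \<union> FVt v"

fun FV :: "fm \<Rightarrow> nat set" where
  "FV (Eq a b) = FVt a \<union> FVt b"
| "FV (Pred p ts) = \<Union> (set (map FVt ts))"
| "FV (Neg A) = FV A"
| "FV (Conj A B) = FV A \<union> FV B"
| "FV (Disj A B) = FV A \<union> FV B"
| "FV (Imp A B) = FV A \<union> FV B"
| "FV (All x A) = FV A - {x}"
| "FV (Ex x A) = FV A - {x}"

definition sentence :: "fm \<Rightarrow> bool" where
  "sentence A \<longleftrightarrow> FV A = {}"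

fun qfree :: "fm \<Rightarrow> bool" where
  "qfree (Eq a b) = True"
| "qfree (Pred p ts) = True"
| "qfree (Neg A) = qfree A"
| "qfree (Conj A B) = (qfree A \<and> qfree B)"
| "qfree (Disj A B) = (qfree A \<and> qfree B)"
| "qfree (Imp A B) = (qfree A \<and> qfree B)"
| "qfree (All x A) = False"
| "qfree (Ex x A) = False"

fun wf_trm :: "trm \<Rightarrow> bool" where
  "wf_trm (Var x) = True"
| "wf_trm (Cst n) = True"
| "wf_trm (Fn w ts) = (ts \<noteq> [] \<and> (\<forall>t\<in>set ts. wf_trm t))"
| "wf_trm (GFn G ts) = (\<forall>t\<in>set ts. wf_trm t)"
| "wf_trm (Fq t) = wf_trm t"
| "wf_trm (Ell G u x v) = (wf_trm u \<and> wf_trm v)"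

fun wf_fm :: "fm \<Rightarrow> bool" where
  "wf_fm (Eq a b) = (wf_trm a \<and> wf_trm b)"
| "wf_fm (Pred p ts) = (ts \<noteq> [] \<and> (\<forall>t\<in>set ts. wf_trm t))"
| "wf_fm (Neg A) = wf_fm A"
| "wf_fm (Conj A B) = (wf_fm A \<and> wf_fm B)"
| "wf_fm (Disj A B) = (wf_fm A \<and> wf_fm B)"
| "wf_fm (Imp A B) = (wf_fm A \<and> wf_fm B)"
| "wf_fm (All x A) = wf_fm A"
| "wf_fm (Ex x A) = wf_fm A"

fun subst :: "nat \<Rightarrow> trm \<Rightarrow> trm \<Rightarrow> trm" where
  "subst y t (Var z) = (if z = y then t else Var z)"
| "subst y t (Cst n) = Cst n"
| "subst y t (Fn w ts) = Fn w (map (subst y t) ts)"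
| "subst y t (GFn G ts) = GFn G (map (subst y t) ts)"
| "subst y t (Fq a) = Fq (subst y t a)"
| "subst y t (Ell G u x v) =
     (if x = y then Ell G u x (subst y t v)
      else Ell G (subst y t u) x (subst y t v))"

lemma size_subst_Cst[simp]: "size (subst y (Cst n) u) = size u"
proof (induction u)
  case (Fn w ts)
  then show ?case by (simp add: size_list_conv_sum_list comp_def cong: map_cong)
next
  case (GFn G ts)
  then show ?case by (simp add: size_list_conv_sum_list comp_def cong: map_cong)
qed auto

function eval :: "(nat \<Rightarrow> nat) \<Rightarrow> (nat \<Rightarrow> nat) \<Rightarrow> trm \<Rightarrow> nat" where
  "eval g s (Var x) = s x"
| "eval g s (Cst n) = n"
| "eval g s (Fn w ts) = w (map (eval g s) ts)"
| "eval g s (GFn G ts) = G (map (eval g s) ts)"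
| "eval g s (Fq a) = g (eval g s a)"
| "eval g s (Ell G u x v) =
     G (map (\<lambda>i. eval g s (subst x (Cst i) u)) [0..<Suc (eval g s v)])"
  by pat_completeness auto
termination
  by (relation "measure (\<lambda>(g, s, t). size t)")
     (auto simp: size_list_estimation' less_Suc_eq_le intro: size_list_estimation')

text \<open>queries g s t: the arguments i at which g (the interpretation of f) is applied
  during the inductive evaluation of t under s.\<close>
function queries :: "(nat \<Rightarrow> nat) \<Rightarrow> (nat \<Rightarrow> nat) \<Rightarrow> trm \<Rightarrow> nat set" where
  "queries g s (Var x) = {}"
| "queries g s (Cst n) = {}"
| "queries g s (Fn w ts) = \<Union> (set (map (queries g s) ts))"
| "queries g s (GFn G ts) = \<Union> (set (map (queries g s) ts))"
| "queries g s (Fq a) = queries g s a \<union> {eval g s a}"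
| "queries g s (Ell G u x v) =
     queries g s v \<union> (\<Union>i \<in> {0..eval g s v}. queries g s (subst x (Cst i) u))"
  by pat_completeness auto
termination
  by (relation "measure (\<lambda>(g, s, t). size t)")
     (auto simp: size_list_estimation' less_Suc_eq_le intro: size_list_estimation')

fun sat :: "(nat \<Rightarrow> nat) \<Rightarrow> (nat \<Rightarrow> nat) \<Rightarrow> fm \<Rightarrow> bool" where
  "sat g s (Eq a b) = (eval g s a = eval g s b)"
| "sat g s (Pred p ts) = (map (eval g s) ts \<in> p)"
| "sat g s (Neg A) = (\<not> sat g s A)"
| "sat g s (Conj A B) = (sat g s A \<and> sat g s B)"
| "sat g s (Disj A B) = (sat g s A \<or> sat g s B)"
| "sat g s (Imp A B) = (sat g s A \<longrightarrow> sat g s B)"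
| "sat g s (All x A) = (\<forall>n. sat g (s(x := n)) A)"
| "sat g s (Ex x A) = (\<exists>n. sat g (s(x := n)) A)"

fun fqueries :: "(nat \<Rightarrow> nat) \<Rightarrow> (nat \<Rightarrow> nat) \<Rightarrow> fm \<Rightarrow> nat set" where
  "fqueries g s (Eq a b) = queries g s a \<union> queries g s b"
| "fqueries g s (Pred p ts) = \<Union> (set (map (queries g s) ts))"
| "fqueries g s (Neg A) = fqueries g s A"
| "fqueries g s (Conj A B) = fqueries g s A \<union> fqueries g s B"
| "fqueries g s (Disj A B) = fqueries g s A \<union> fqueries g s B"
| "fqueries g s (Imp A B) = fqueries g s A \<union> fqueries g s B"
| "fqueries g s (All x A) = (\<Union>n. fqueries g (s(x := n)) A)"
| "fqueries g s (Ex x A) = (\<Union>n. fqueries g (s(x := n)) A)"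

text \<open>M_g |= A (for all assignments; for sentences this is independent of the assignment).\<close>
definition models :: "(nat \<Rightarrow> nat) \<Rightarrow> fm \<Rightarrow> bool" where
  "models g A \<longleftrightarrow> (\<forall>s. sat g s A)"

end

theory Submission
  imports Defs
begin

text \<open>Evaluating a quantifier-free sentence in \<open>M_g\<close> queries \<open>g\<close> at only finitely many
  arguments, and both the truth value and the set of queried arguments depend only on the
  values of \<open>g\<close> at those arguments (a query is decided before its value is used, so the
  evaluations under \<open>f\<close> and under \<open>g\<close> run in lockstep as long as \<open>f\<close> and \<open>g\<close> agree on what
  has been queried so far). Hence \<open>k\<close> can be taken to be the largest argument queried when
  evaluating under \<open>f\<close>; conversely, \<open>g = f\<close> extends \<open>f(0), \<dots>, f(k)\<close>.\<close>

lemma FVt_subst_Cst [simp]: "FVt (subst y (Cst n) t) = FVt t - {y}"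
  by (induction t) auto

lemma finite_queries: "finite (queries g s t)"
  by (induction g s t rule: queries.induct) auto

lemma finite_fqueries: "qfree A \<Longrightarrow> finite (fqueries g s A)"
  by (induction A) (auto simp: finite_queries)

lemma eval_queries_cong:
  assumes "\<forall>x\<in>FVt t. s x = s' x" and "\<forall>i\<in>queries g s t. g i = g' i"
  shows "eval g s t = eval g' s' t \<and> queries g s t = queries g' s' t"
  using assms
proof (induction g s t arbitrary: s' rule: eval.induct)
  case (3 g s w ts)
  then have "\<forall>t\<in>set ts. eval g s t = eval g' s' t \<and> queries g s t = queries g' s' t"
    by fastforce
  then show ?case by (simp cong: map_cong)
next
  case (4 g s G ts)
  then have "\<forall>t\<in>set ts. eval g s t = eval g' s' t \<and> queries g s t = queries g' s' t"
    by fastforce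
  then show ?case by (simp cong: map_cong)
next
  case (5 g s a)
  then have "eval g s a = eval g' s' a \<and> queries g s a = queries g' s' a"
    by auto
  with "5.prems"(2) show ?case by auto
next
  case (6 g s G u x v)
  have v: "eval g s v = eval g' s' v \<and> queries g s v = queries g' s' v"
    using "6.prems" by (intro "6.IH"(1)) auto
  have u: "eval g s (subst x (Cst i) u) = eval g' s' (subst x (Cst i) u)
      \<and> queries g s (subst x (Cst i) u) = queries g' s' (subst x (Cst i) u)"
    if "i \<in> {0..eval g s v}" for i
    using that "6.prems" by (intro "6.IH"(2)) auto
  show ?case
    using u v by (auto simp: atLeastAtMost_upt intro!: arg_cong[where f = G] map_cong)
qed auto

lemma sat_fqueries_cong:
  assumes "qfree A" and "\<forall>x\<in>FV A. s x = s' x" and "\<forall>i\<in>fqueries g s A. g i = g' i"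
  shows "sat g s A = sat g' s' A \<and> fqueries g s A = fqueries g' s' A"
  using assms
proof (induction A)
  case (Eq a b)
  then have "eval g s a = eval g' s' a \<and> queries g s a = queries g' s' a"
    and "eval g s b = eval g' s' b \<and> queries g s b = queries g' s' b"
    by (auto intro!: eval_queries_cong)
  then show ?case by simp
next
  case (Pred p ts)
  then have "\<forall>t\<in>set ts. eval g s t = eval g' s' t \<and> queries g s t = queries g' s' t"
    by (auto intro!: eval_queries_cong)
  then show ?case by (simp cong: map_cong)
qed auto

lemma sentence_queries_bounded:
  assumes "qfree \<phi>" and "sentence \<phi>"
  obtains k where "\<And>s. fqueries f s \<phi> \<subseteq> {..k}"
proof
  fix s
  have "fqueries f s \<phi> = fqueries f (\<lambda>_. 0) \<phi>"
    using assms by (intro sat_fqueries_cong[THEN conjunct2]) (auto simp: sentence_def)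
  then show "fqueries f s \<phi> \<subseteq> {..Max (insert 0 (fqueries f (\<lambda>_. 0) \<phi>))}"
    using finite_fqueries[OF assms(1)] by auto
qed

theorem corollary3p6:
  fixes \<phi> :: fm and f :: "nat \<Rightarrow> nat"
  assumes "wf_fm \<phi>" and "qfree \<phi>" and "sentence \<phi>"
  shows "models f \<phi> \<longleftrightarrow>
    (\<exists>k::nat. \<forall>g::nat \<Rightarrow> nat. (\<forall>i\<le>k. g i = f i) \<longrightarrow>
        models g \<phi> \<and> (\<forall>s. fqueries g s \<phi> \<subseteq> {..k}))"
proof
  assume f: "models f \<phi>"
  obtain k where k: "\<And>s. fqueries f s \<phi> \<subseteq> {..k}"
    using sentence_queries_bounded[OF assms(2,3), where f = f] by blast
  have "models g \<phi> \<and> (\<forall>s. fqueries g s \<phi> \<subseteq> {..k})" if "\<forall>i\<le>k. g i = f i" for g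
  proof -
    have "sat f s \<phi> = sat g s \<phi> \<and> fqueries f s \<phi> = fqueries g s \<phi>" for s
      using k that assms(2) by (intro sat_fqueries_cong) force+
    then show ?thesis
      using f k unfolding models_def by metis
  qed
  then show "\<exists>k. \<forall>g. (\<forall>i\<le>k. g i = f i) \<longrightarrow> models g \<phi> \<and> (\<forall>s. fqueries g s \<phi> \<subseteq> {..k})"
    by blast
qed blast

end
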